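(* The multi-ideal $\mathcal{L}_\varepsilon$ is not represented by the injective tensor norm $\varepsilon$.
   Context: All spaces are over a fixed field $\mathbb{K}=\mathbb{R}$ or $\mathbb{C}$. $\mathcal{L}(E_1,\ldots,E_n;F)$ is the space of continuous $n$-linear maps with the sup norm, and $E'$ is the dual of $E$. $\varepsilon=(\varepsilon_n)$ is the injective tensor norm, $\varepsilon_n(\sum_j x^{(1)}_j\otimes\cdots\otimes x^{(n)}_j)=\sup_{\varphi_l\in B_{E_l'}}|\sum_j\varphi_1(x_j^{(1)})\cdots\varphi_n(x_j^{(n)})|$. $\mathcal{L}_\varepsilon(E_1,\ldots,E_n;F)$ is the space of $A\in\mathcal{L}(E_1,\ldots,E_n;F)$ whose linearization $A_L\colon(E_1\otimes\cdots\otimes E_n,\varepsilon_n)\to F$, $A_L(x_1\otimes\cdots\otimes x_n)=A(x_1,\ldots,x_n)$, is continuous. Its norm is $\|A\|=\|A_L\|$. A multi-ideal $\mathcal M$ is represented by a tensor norm $\beta$ if for every $n$ and all Banach spaces $E_1,\ldots,E_n,F$ the canonical map $\varphi\colon\mathcal{M}(E_1,\ldots,E_n;F')\to(E_1\otimes\cdots\otimes E_n\otimes F,\beta_{n+1})'$, $\varphi(T)(x_1\otimes\cdots\otimes x_n\otimes y)=T(x_1,\ldots,x_n)(y)$, is an isometric isomorphism onto. *)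

theory Defs
  imports Complex_Main
begin

text \<open>
  Banach spaces are modelled as closed linear subspaces of the space of bounded
  sequences nat => 'k with the sup norm (every separable Banach space is of this form
  up to isometric isomorphism).  Tuples (x_1,...,x_k) are functions nat => vector,
  only the indices l < k being relevant.  Finite tensors sum_j x_j^(1) (x) ... (x) x_j^(k)
  are represented by families xs j l (j < m, l < k).
\<close>

type_synonym 'k vec = "nat \<Rightarrow> 'k"

definition nrm :: "'k::real_normed_field vec \<Rightarrow> real" where
  "nrm x = (SUP i. norm (x i))"

definition banach_sub :: "'k::real_normed_field vec set \<Rightarrow> bool" where
  "banach_sub E \<longleftrightarrow>
     (\<forall>x\<in>E. bdd_above (range (\<lambda>i. norm (x i)))) \<and>
     (\<lambda>i. 0) \<in> E \<and>
     (\<forall>x\<in>E. \<forall>y\<in>E. (\<lambda>i. x i + y i) \<in> E) \<and>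
     (\<forall>c. \<forall>x\<in>E. (\<lambda>i. c * x i) \<in> E) \<and>
     (\<forall>u. (\<forall>k. u k \<in> E) \<and>
          (\<forall>e>0. \<exists>N. \<forall>p\<ge>N. \<forall>q\<ge>N. nrm (\<lambda>i. u p i - u q i) < e) \<longrightarrow>
          (\<exists>x\<in>E. (\<lambda>k. nrm (\<lambda>i. u k i - x i)) \<longlonglongrightarrow> 0))"

definition dual :: "'k::real_normed_field vec set \<Rightarrow> ('k vec \<Rightarrow> 'k) set" where
  "dual F = {f. (\<forall>x\<in>F. \<forall>y\<in>F. f (\<lambda>i. x i + y i) = f x + f y) \<and>
                (\<forall>c. \<forall>x\<in>F. f (\<lambda>i. c * x i) = c * f x) \<and>
                (\<exists>C. \<forall>x\<in>F. norm (f x) \<le> C * nrm x)}"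

definition opnorm :: "'k::real_normed_field vec set \<Rightarrow> ('k vec \<Rightarrow> 'k) \<Rightarrow> real" where
  "opnorm F f = (SUP x\<in>{x\<in>F. nrm x \<le> 1}. norm (f x))"

definition dual_ball :: "'k::real_normed_field vec set \<Rightarrow> ('k vec \<Rightarrow> 'k) set" where
  "dual_ball F = {f\<in>dual F. opnorm F f \<le> 1}"

definition tuples :: "(nat \<Rightarrow> 'k vec set) \<Rightarrow> nat \<Rightarrow> (nat \<Rightarrow> 'k vec) set" where
  "tuples E k = {x. \<forall>l<k. x l \<in> E l}"

definition multilin :: "(nat \<Rightarrow> 'k::real_normed_field vec set) \<Rightarrow> nat \<Rightarrow> ((nat \<Rightarrow> 'k vec) \<Rightarrow> 'k) \<Rightarrow> bool" where
  "multilin E k A \<longleftrightarrow>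
     (\<forall>x x'. (\<forall>l<k. x l = x' l) \<longrightarrow> A x = A x') \<and>
     (\<forall>x\<in>tuples E k. \<forall>i<k. \<forall>u\<in>E i. \<forall>v\<in>E i.
        A (x(i := (\<lambda>j. u j + v j))) = A (x(i := u)) + A (x(i := v)) \<and>
        (\<forall>c. A (x(i := (\<lambda>j. c * u j))) = c * A (x(i := u))))"

definition epsn :: "(nat \<Rightarrow> 'k::real_normed_field vec set) \<Rightarrow> nat \<Rightarrow> nat \<Rightarrow> (nat \<Rightarrow> nat \<Rightarrow> 'k vec) \<Rightarrow> real" where
  "epsn E k m xs = (SUP \<phi>\<in>{\<phi>. \<forall>l<k. \<phi> l \<in> dual_ball (E l)}.
                      norm (\<Sum>j<m. \<Prod>l<k. \<phi> l (xs j l)))"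

text \<open>L_eps(E_0,...,E_{n-1}; F'): n-linear maps T with values in F' whose linearization
  is continuous for eps_n; C bounds the norm of the linearization.\<close>
definition L_eps_bound :: "(nat \<Rightarrow> 'k::real_normed_field vec set) \<Rightarrow> nat \<Rightarrow> 'k vec set \<Rightarrow>
    ((nat \<Rightarrow> 'k vec) \<Rightarrow> 'k vec \<Rightarrow> 'k) \<Rightarrow> real \<Rightarrow> bool" where
  "L_eps_bound E n F T C \<longleftrightarrow>
     (\<forall>m xs. (\<forall>j<m. xs j \<in> tuples E n) \<longrightarrow>
        opnorm F (\<lambda>y. \<Sum>j<m. T (xs j) y) \<le> C * epsn E n m xs)"

definition L_eps :: "(nat \<Rightarrow> 'k::real_normed_field vec set) \<Rightarrow> nat \<Rightarrow> 'k vec set \<Rightarrow>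
    ((nat \<Rightarrow> 'k vec) \<Rightarrow> 'k vec \<Rightarrow> 'k) set" where
  "L_eps E n F = {T. (\<forall>x x'. (\<forall>l<n. x l = x' l) \<longrightarrow> T x = T x') \<and>
                     (\<forall>x\<in>tuples E n. T x \<in> dual F) \<and>
                     (\<forall>y\<in>F. multilin E n (\<lambda>x. T x y)) \<and>
                     (\<exists>C. \<forall>x\<in>tuples E n. opnorm F (T x) \<le> C * (\<Prod>l<n. nrm (x l))) \<and>
                     (\<exists>C. L_eps_bound E n F T C)}"

definition L_eps_norm :: "(nat \<Rightarrow> 'k::real_normed_field vec set) \<Rightarrow> nat \<Rightarrow> 'k vec set \<Rightarrow>
    ((nat \<Rightarrow> 'k vec) \<Rightarrow> 'k vec \<Rightarrow> 'k) \<Rightarrow> real" where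
  "L_eps_norm E n F T = Inf {C. 0 \<le> C \<and> L_eps_bound E n F T C}"

text \<open>The dual of (E_0 (x) ... (x) E_{k-1}, eps_k), identified with k-linear forms.\<close>
definition eps_dual_bound :: "(nat \<Rightarrow> 'k::real_normed_field vec set) \<Rightarrow> nat \<Rightarrow>
    ((nat \<Rightarrow> 'k vec) \<Rightarrow> 'k) \<Rightarrow> real \<Rightarrow> bool" where
  "eps_dual_bound E k B C \<longleftrightarrow>
     (\<forall>m xs. (\<forall>j<m. xs j \<in> tuples E k) \<longrightarrow>
        norm (\<Sum>j<m. B (xs j)) \<le> C * epsn E k m xs)"

definition eps_dual :: "(nat \<Rightarrow> 'k::real_normed_field vec set) \<Rightarrow> nat \<Rightarrow> ((nat \<Rightarrow> 'k vec) \<Rightarrow> 'k) set" where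
  "eps_dual E k = {B. multilin E k B \<and> (\<exists>C. eps_dual_bound E k B C)}"

definition eps_dual_norm :: "(nat \<Rightarrow> 'k::real_normed_field vec set) \<Rightarrow> nat \<Rightarrow> ((nat \<Rightarrow> 'k vec) \<Rightarrow> 'k) \<Rightarrow> real" where
  "eps_dual_norm E k B = Inf {C. 0 \<le> C \<and> eps_dual_bound E k B C}"

definition canon :: "nat \<Rightarrow> ((nat \<Rightarrow> 'k vec) \<Rightarrow> 'k vec \<Rightarrow> 'k) \<Rightarrow> (nat \<Rightarrow> 'k vec) \<Rightarrow> 'k" where
  "canon n T = (\<lambda>z. T z (z n))"

text \<open>L_eps is represented by eps (over the scalar field 'k): for all n >= 1 and all
  Banach spaces E_0..E_{n-1}, F the canonical map is an isometric isomorphism onto.\<close>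
definition L_eps_represented_by_eps :: "'k::real_normed_field itself \<Rightarrow> bool" where
  "L_eps_represented_by_eps _ \<longleftrightarrow>
     (\<forall>n\<ge>1. \<forall>(E :: nat \<Rightarrow> 'k vec set) (F :: 'k vec set).
        (\<forall>l<n. banach_sub (E l)) \<and> banach_sub F \<longrightarrow>
        (\<forall>T\<in>L_eps E n F.
            canon n T \<in> eps_dual (E(n := F)) (Suc n) \<and>
            eps_dual_norm (E(n := F)) (Suc n) (canon n T) = L_eps_norm E n F T) \<and>
        (\<forall>B\<in>eps_dual (E(n := F)) (Suc n). \<exists>T\<in>L_eps E n F.
            \<forall>z\<in>tuples (E(n := F)) (Suc n). canon n T z = B z))"

end

theory Submission
  imports Defs
begin

text \<open>
  For n = 1 the injective norm \<open>\<epsilon>\<^sub>1\<close> is just the norm of E, so \<open>\<L>\<^sub>\<epsilon>(E; F')\<close> consists of all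
  bounded operators \<open>E \<rightarrow> F'\<close> with the operator norm, whereas \<open>(E \<otimes>\<^sub>\<epsilon> F)'\<close> carries the
  (larger) integral norm. Take \<open>E = F = \<ell>\<^sub>\<infinity>\<^sup>2\<close> and the Hadamard operator
  \<open>T x y = x\<^sub>0 (y\<^sub>0 + y\<^sub>1) + x\<^sub>1 (y\<^sub>0 - y\<^sub>1)\<close>. Its operator norm is
  \<open>sup {|a + b| + |a - b| : |a|, |b| \<le> 1}\<close>, which is 2 over \<open>\<real>\<close> and \<open>2\<surd>2\<close> over \<open>\<complex>\<close>, hence
  below 4. But on the tensor \<open>e\<^sub>0\<otimes>e\<^sub>0 + e\<^sub>0\<otimes>e\<^sub>1 + e\<^sub>1\<otimes>e\<^sub>0 - e\<^sub>1\<otimes>e\<^sub>1\<close>, whose injective norm is at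
  most 1 because the dual unit ball of \<open>\<ell>\<^sub>\<infinity>\<^sup>2\<close> is that of \<open>\<ell>\<^sub>1\<^sup>2\<close>, the associated bilinear form
  takes the value 4. So the canonical map cannot be isometric.
\<close>

lemma norm_le_nrm: "bdd_above (range (\<lambda>i. norm (x i))) \<Longrightarrow> norm (x i) \<le> nrm x"
  unfolding nrm_def by (rule cSUP_upper) auto

lemma nrm_nonneg: "bdd_above (range (\<lambda>i. norm (x i))) \<Longrightarrow> 0 \<le> nrm x"
  using norm_le_nrm norm_ge_zero order_trans by blast

lemma nrm_le: "(\<And>i. norm (x i) \<le> M) \<Longrightarrow> nrm x \<le> M"
  unfolding nrm_def by (rule cSUP_least) auto

lemma nrm_zero: "nrm (\<lambda>i. 0 :: 'k::real_normed_field) = 0"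
  by (simp add: nrm_def)

lemma banach_sub_bdd_above: "banach_sub E \<Longrightarrow> x \<in> E \<Longrightarrow> bdd_above (range (\<lambda>i. norm (x i)))"
  by (simp add: banach_sub_def)

lemma banach_sub_zero: "banach_sub E \<Longrightarrow> (\<lambda>i. 0) \<in> E"
  by (simp add: banach_sub_def)

lemma banach_sub_scale: "banach_sub E \<Longrightarrow> x \<in> E \<Longrightarrow> (\<lambda>i. c * x i) \<in> E"
  by (simp add: banach_sub_def)

lemma dual_scale: "f \<in> dual E \<Longrightarrow> x \<in> E \<Longrightarrow> f (\<lambda>i. c * x i) = c * f x"
  by (simp add: dual_def)

lemma opnorm_upper:
  fixes f :: "'k::real_normed_field vec \<Rightarrow> 'k"
  assumes E: "banach_sub E" and f: "f \<in> dual E" and x: "x \<in> E" "nrm x \<le> 1"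
  shows "norm (f x) \<le> opnorm E f"
proof -
  obtain C where C: "\<forall>y\<in>E. norm (f y) \<le> C * nrm y" using f by (auto simp: dual_def)
  have "norm (f y) \<le> max C 0" if y: "y \<in> E" "nrm y \<le> 1" for y
  proof -
    have "norm (f y) \<le> C * nrm y" using C y(1) by blast
    also have "\<dots> \<le> max C 0 * 1"
      using nrm_nonneg[OF banach_sub_bdd_above[OF E y(1)]] y(2) by (intro mult_mono) auto
    finally show ?thesis by simp
  qed
  then have "bdd_above ((\<lambda>y. norm (f y)) ` {y\<in>E. nrm y \<le> 1})"
    by (intro bdd_aboveI2) auto
  then show ?thesis unfolding opnorm_def using x by (intro cSUP_upper) auto
qed

lemma opnorm_le:
  fixes f :: "'k::real_normed_field vec \<Rightarrow> 'k"
  assumes "banach_sub E" and "\<And>y. y \<in> E \<Longrightarrow> nrm y \<le> 1 \<Longrightarrow> norm (f y) \<le> M"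
  shows "opnorm E f \<le> M"
proof -
  have "(\<lambda>i. 0) \<in> {y\<in>E. nrm y \<le> 1}"
    using banach_sub_zero[OF assms(1)] by (simp add: nrm_zero)
  then show ?thesis unfolding opnorm_def using assms(2) by (intro cSUP_least) auto
qed

lemma dual_ball_norm_le:
  fixes f :: "'k::real_normed_field vec \<Rightarrow> 'k"
  assumes E: "banach_sub E" and f: "f \<in> dual_ball E" and x: "x \<in> E"
  shows "norm (f x) \<le> nrm x"
proof -
  have f': "f \<in> dual E" "opnorm E f \<le> 1" using f by (auto simp: dual_ball_def)
  have bdd: "bdd_above (range (\<lambda>i. norm (x i)))" using banach_sub_bdd_above E x .
  show ?thesis
  proof (cases "nrm x = 0")
    case True
    have "x = (\<lambda>i. 0 * x i)"
      using norm_le_nrm[OF bdd] True by (simp add: fun_eq_iff)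
    then have "f x = 0 * f x"
      using dual_scale[OF f'(1) x] by metis
    then show ?thesis using True by simp
  next
    case False
    with nrm_nonneg[OF bdd] have pos: "0 < nrm x" by simp
    define y where "y = (\<lambda>i. of_real (1 / nrm x) * x i)"
    have "nrm y \<le> 1"
      unfolding y_def using norm_le_nrm[OF bdd] pos
      by (intro nrm_le) (simp add: norm_divide pos_divide_le_eq abs_of_pos)
    moreover have "y \<in> E" unfolding y_def by (rule banach_sub_scale[OF E x])
    ultimately have "norm (f y) \<le> opnorm E f" by (rule opnorm_upper[OF E f'(1), rotated])
    moreover have "norm (f y) = norm (f x) / nrm x"
      unfolding y_def dual_scale[OF f'(1) x] using pos by (simp add: norm_divide abs_of_pos)
    ultimately have "norm (f x) / nrm x \<le> 1"
      using f'(2) by linarith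
    then show ?thesis using pos by (simp add: pos_divide_le_eq)
  qed
qed

lemma zero_in_dual_ball: "banach_sub E \<Longrightarrow> (\<lambda>x. 0) \<in> dual_ball E"
  unfolding dual_ball_def dual_def by (auto intro!: exI[of _ 0] opnorm_le)

lemma coordinate_in_dual_ball:
  assumes E: "banach_sub E"
  shows "(\<lambda>x. x i) \<in> dual_ball E"
proof -
  have le: "norm (x i) \<le> nrm x" if "x \<in> E" for x
    by (rule norm_le_nrm[OF banach_sub_bdd_above[OF E that]])
  have "(\<lambda>x. x i) \<in> dual E"
    unfolding dual_def using le by (auto intro!: exI[of _ 1])
  moreover have "opnorm E (\<lambda>x. x i) \<le> 1"
    using E le by (intro opnorm_le) fastforce+
  ultimately show ?thesis by (simp add: dual_ball_def)
qed

subsection \<open>Injective tensor norms\<close>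

context
  fixes E :: "nat \<Rightarrow> 'k::real_normed_field vec set" and k :: nat
  assumes E: "\<And>l. l < k \<Longrightarrow> banach_sub (E l)"
begin

lemma epsn_bdd_above:
  assumes xs: "\<forall>j<m. xs j \<in> tuples E k"
  shows "bdd_above ((\<lambda>\<phi>. norm (\<Sum>j<m. \<Prod>l<k. \<phi> l (xs j l))) ` {\<phi>. \<forall>l<k. \<phi> l \<in> dual_ball (E l)})"
proof (rule bdd_aboveI2)
  fix \<phi> :: "nat \<Rightarrow> 'k vec \<Rightarrow> 'k" assume \<phi>: "\<phi> \<in> {\<phi>. \<forall>l<k. \<phi> l \<in> dual_ball (E l)}"
  have "norm (\<Sum>j<m. \<Prod>l<k. \<phi> l (xs j l)) \<le> (\<Sum>j<m. norm (\<Prod>l<k. \<phi> l (xs j l)))"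
    by (rule norm_sum)
  also have "\<dots> = (\<Sum>j<m. \<Prod>l<k. norm (\<phi> l (xs j l)))"
    by (simp add: prod_norm)
  also have "\<dots> \<le> (\<Sum>j<m. \<Prod>l<k. nrm (xs j l))"
  proof (intro sum_mono prod_mono conjI norm_ge_zero)
    fix j l assume "j \<in> {..<m}" "l \<in> {..<k}"
    then have "l < k" "xs j l \<in> E l" "\<phi> l \<in> dual_ball (E l)"
      using xs \<phi> by (auto simp: tuples_def)
    then show "norm (\<phi> l (xs j l)) \<le> nrm (xs j l)"
      using E dual_ball_norm_le by blast
  qed
  finally show "norm (\<Sum>j<m. \<Prod>l<k. \<phi> l (xs j l)) \<le> (\<Sum>j<m. \<Prod>l<k. nrm (xs j l))" .
qed

lemma norm_le_epsn:
  assumes "\<forall>j<m. xs j \<in> tuples E k" and "\<forall>l<k. \<phi> l \<in> dual_ball (E l)"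
  shows "norm (\<Sum>j<m. \<Prod>l<k. \<phi> l (xs j l)) \<le> epsn E k m xs"
  unfolding epsn_def using assms by (intro cSUP_upper epsn_bdd_above) auto

lemma epsn_nonneg:
  assumes "\<forall>j<m. xs j \<in> tuples E k"
  shows "0 \<le> epsn E k m xs"
proof -
  have "\<forall>l<k. (\<lambda>l (x::'k vec). 0::'k) l \<in> dual_ball (E l)"
    using E zero_in_dual_ball by auto
  from norm_le_epsn[OF assms this] show ?thesis
    by (meson norm_ge_zero order_trans)
qed

lemma epsn_le:
  assumes "\<And>\<phi>. \<forall>l<k. \<phi> l \<in> dual_ball (E l) \<Longrightarrow> norm (\<Sum>j<m. \<Prod>l<k. \<phi> l (xs j l)) \<le> M"
  shows "epsn E k m xs \<le> M"
proof -
  have "(\<lambda>l x. 0) \<in> {\<phi>. \<forall>l<k. \<phi> l \<in> dual_ball (E l)}"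
    using E zero_in_dual_ball by auto
  then show ?thesis unfolding epsn_def using assms by (intro cSUP_least) auto
qed

lemma norm_sum_le_eps_dual_norm:
  assumes B: "B \<in> eps_dual E k" and xs: "\<forall>j<m. xs j \<in> tuples E k" and le1: "epsn E k m xs \<le> 1"
  shows "norm (\<Sum>j<m. B (xs j)) \<le> eps_dual_norm E k B"
proof -
  obtain C where C: "eps_dual_bound E k B C" using B by (auto simp: eps_dual_def)
  have "eps_dual_bound E k B (max C 0)"
    unfolding eps_dual_bound_def
  proof (intro allI impI)
    fix m' and ys :: "nat \<Rightarrow> nat \<Rightarrow> 'k vec" assume ys: "\<forall>j<m'. ys j \<in> tuples E k"
    have "norm (\<Sum>j<m'. B (ys j)) \<le> C * epsn E k m' ys"
      using C ys by (simp add: eps_dual_bound_def)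
    also have "\<dots> \<le> max C 0 * epsn E k m' ys"
      using epsn_nonneg[OF ys] by (intro mult_right_mono) auto
    finally show "norm (\<Sum>j<m'. B (ys j)) \<le> max C 0 * epsn E k m' ys" .
  qed
  then have ne: "{C. 0 \<le> C \<and> eps_dual_bound E k B C} \<noteq> {}" by force
  show ?thesis unfolding eps_dual_norm_def
  proof (rule cInf_greatest[OF ne])
    fix D assume D: "D \<in> {C. 0 \<le> C \<and> eps_dual_bound E k B C}"
    have "norm (\<Sum>j<m. B (xs j)) \<le> D * epsn E k m xs"
      using D xs unfolding eps_dual_bound_def by blast
    also have "\<dots> \<le> D" using D le1 mult_left_le by auto
    finally show "norm (\<Sum>j<m. B (xs j)) \<le> D" .
  qed
qed

end

lemma L_eps_norm_le: "L_eps_bound E n F T C \<Longrightarrow> 0 \<le> C \<Longrightarrow> L_eps_norm E n F T \<le> C"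
  unfolding L_eps_norm_def by (intro cInf_lower) (auto intro: bdd_belowI[of _ 0])

lemma L_eps_represented_by_epsD:
  fixes E :: "nat \<Rightarrow> 'k::real_normed_field vec set"
  assumes "L_eps_represented_by_eps TYPE('k)" "1 \<le> n" "\<forall>l<n. banach_sub (E l)" "banach_sub F"
    and "T \<in> L_eps E n F"
  shows "canon n T \<in> eps_dual (E(n := F)) (Suc n)"
    and "eps_dual_norm (E(n := F)) (Suc n) (canon n T) = L_eps_norm E n F T"
proof -
  note canon_props = assms(1)[unfolded L_eps_represented_by_eps_def,
      THEN spec[of _ n], THEN mp, OF assms(2), THEN spec[of _ E], THEN spec[of _ F],
      THEN mp, OF conjI[OF assms(3,4)], THEN conjunct1, THEN bspec, OF assms(5)]
  show "canon n T \<in> eps_dual (E(n := F)) (Suc n)"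
    by (rule conjunct1[OF canon_props])
  show "eps_dual_norm (E(n := F)) (Suc n) (canon n T) = L_eps_norm E n F T"
    by (rule conjunct2[OF canon_props])
qed

subsection \<open>The space \<open>\<ell>\<^sub>\<infinity>\<^sup>2\<close>\<close>

definition ell_inf2 :: "'k::real_normed_field vec set" where
  "ell_inf2 = {x. \<forall>i\<ge>2. x i = 0}"

lemma ell_inf2_iff: "x \<in> ell_inf2 \<longleftrightarrow> (\<forall>i\<ge>2. x i = 0)"
  by (simp add: ell_inf2_def)

lemma ell_inf2_diff: "x \<in> ell_inf2 \<Longrightarrow> y \<in> ell_inf2 \<Longrightarrow> (\<lambda>i. x i - y i) \<in> ell_inf2"
  by (simp add: ell_inf2_iff)

lemma norm_le_max_ell_inf2: "x \<in> ell_inf2 \<Longrightarrow> norm (x i) \<le> max (norm (x 0)) (norm (x 1))"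
  by (cases "i < 2") (auto simp: ell_inf2_iff less_2_cases_iff le_max_iff_disj)

lemma nrm_ell_inf2:
  assumes x: "x \<in> ell_inf2"
  shows "nrm x = max (norm (x 0)) (norm (x 1))"
proof (rule antisym)
  show "nrm x \<le> max (norm (x 0)) (norm (x 1))"
    by (rule nrm_le) (rule norm_le_max_ell_inf2[OF x])
  have "bdd_above (range (\<lambda>i. norm (x i)))"
    using norm_le_max_ell_inf2[OF x] by (intro bdd_aboveI2)
  then show "max (norm (x 0)) (norm (x 1)) \<le> nrm x"
    by (simp add: norm_le_nrm)
qed

lemma banach_sub_ell_inf2: "banach_sub (ell_inf2 :: 'k::{real_normed_field,banach} vec set)"
  unfolding banach_sub_def
proof (intro conjI ballI allI impI)
  fix x :: "'k vec" assume "x \<in> ell_inf2"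
  then show "bdd_above (range (\<lambda>i. norm (x i)))"
    using norm_le_max_ell_inf2 by (intro bdd_aboveI2)
next
  fix u :: "nat \<Rightarrow> 'k vec"
  assume u: "(\<forall>k. u k \<in> ell_inf2) \<and> (\<forall>e>0. \<exists>N. \<forall>p\<ge>N. \<forall>q\<ge>N. nrm (\<lambda>i. u p i - u q i) < e)"
  have diff: "(\<lambda>i. u p i - u q i) \<in> ell_inf2" for p q
    using u by (simp add: ell_inf2_diff)
  have "Cauchy (\<lambda>k. u k i)" for i
  proof (rule metric_CauchyI)
    fix e :: real assume "e > 0"
    then obtain N where N: "\<forall>p\<ge>N. \<forall>q\<ge>N. nrm (\<lambda>i. u p i - u q i) < e" using u by blast
    have "norm (u p i - u q i) \<le> nrm (\<lambda>i. u p i - u q i)" for p q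
      using norm_le_max_ell_inf2[OF diff[of p q], of i] by (simp add: nrm_ell_inf2[OF diff])
    then have "dist (u p i) (u q i) < e" if "N \<le> p" "N \<le> q" for p q
      using N that by (simp add: dist_norm) (meson le_less_trans)
    then show "\<exists>M. \<forall>p\<ge>M. \<forall>q\<ge>M. dist (u p i) (u q i) < e" by blast
  qed
  then have lim: "(\<lambda>k. u k i) \<longlonglongrightarrow> lim (\<lambda>k. u k i)" for i
    using Cauchy_convergent_iff convergent_LIMSEQ_iff by blast
  define x where "x = (\<lambda>i. if i < 2 then lim (\<lambda>k. u k i) else 0)"
  have x: "x \<in> ell_inf2" by (simp add: x_def ell_inf2_iff)
  have "(\<lambda>k. norm (u k i - x i)) \<longlonglongrightarrow> 0" if "i < 2" for i
    using lim[of i] that by (simp add: x_def tendsto_norm_zero_iff LIM_zero_iff)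
  then have "(\<lambda>k. max (norm (u k 0 - x 0)) (norm (u k 1 - x 1))) \<longlonglongrightarrow> max 0 0"
    by (intro tendsto_max) auto
  moreover have "nrm (\<lambda>i. u k i - x i) = max (norm (u k 0 - x 0)) (norm (u k 1 - x 1))" for k
    using u x by (simp add: nrm_ell_inf2[OF ell_inf2_diff])
  ultimately have "(\<lambda>k. nrm (\<lambda>i. u k i - x i)) \<longlonglongrightarrow> 0" by simp
  with x show "\<exists>x\<in>ell_inf2. (\<lambda>k. nrm (\<lambda>i. u k i - x i)) \<longlonglongrightarrow> 0" by blast
qed (auto simp: ell_inf2_iff)

definition basis_vec :: "nat \<Rightarrow> 'k::real_normed_field vec" where
  "basis_vec i = (\<lambda>j. if j = i then 1 else 0)"

lemma basis_vec_in_ell_inf2: "i < 2 \<Longrightarrow> basis_vec i \<in> ell_inf2"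
  by (simp add: basis_vec_def ell_inf2_iff)

lemma dual_ell_inf2_eq:
  assumes f: "f \<in> dual ell_inf2" and x: "x \<in> ell_inf2"
  shows "f x = x 0 * f (basis_vec 0) + x 1 * f (basis_vec 1)"
proof -
  have "x = (\<lambda>i. (\<lambda>i. x 0 * basis_vec 0 i) i + (\<lambda>i. x 1 * basis_vec 1 i) i)"
    using x by (auto simp: fun_eq_iff basis_vec_def ell_inf2_iff not_less[symmetric] less_2_cases_iff)
  then have "f x = f (\<lambda>i. (\<lambda>i. x 0 * basis_vec 0 i) i + (\<lambda>i. x 1 * basis_vec 1 i) i)"
    by (rule arg_cong)
  also have "\<dots> = f (\<lambda>i. x 0 * basis_vec 0 i) + f (\<lambda>i. x 1 * basis_vec 1 i)"
    using f by (simp add: dual_def ell_inf2_iff basis_vec_def)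
  also have "\<dots> = x 0 * f (basis_vec 0) + x 1 * f (basis_vec 1)"
    using dual_scale[OF f basis_vec_in_ell_inf2] by simp
  finally show ?thesis .
qed

lemma unit_mult_eq_norm: "\<exists>u::'k::real_normed_field. norm u = 1 \<and> u * a = of_real (norm a)"
proof (cases "a = 0")
  case True
  then show ?thesis by (intro exI[of _ 1]) simp
next
  case False
  then show ?thesis by (intro exI[of _ "of_real (norm a) / a"]) (simp add: norm_divide)
qed

lemma dual_ball_ell_inf2_le:
  fixes f :: "'k::{real_normed_field,banach} vec \<Rightarrow> 'k"
  assumes f: "f \<in> dual_ball ell_inf2"
  shows "norm (f (basis_vec 0)) + norm (f (basis_vec 1)) \<le> 1"
proof -
  have fd: "f \<in> dual ell_inf2" using f by (simp add: dual_ball_def)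
  obtain u0 u1 :: 'k where u: "norm u0 = 1" "norm u1 = 1"
    and u0: "u0 * f (basis_vec 0) = of_real (norm (f (basis_vec 0)))"
    and u1: "u1 * f (basis_vec 1) = of_real (norm (f (basis_vec 1)))"
    using unit_mult_eq_norm by metis
  define w :: "'k vec" where "w = (\<lambda>i. if i = 0 then u0 else if i = 1 then u1 else 0)"
  have w: "w \<in> ell_inf2" by (simp add: w_def ell_inf2_iff)
  have "nrm w \<le> 1" using u by (intro nrm_le) (simp add: w_def)
  then have "norm (f w) \<le> opnorm ell_inf2 f"
    using opnorm_upper[OF banach_sub_ell_inf2 fd w] by simp
  also have "\<dots> \<le> 1" using f by (simp add: dual_ball_def)
  also have "f w = of_real (norm (f (basis_vec 0)) + norm (f (basis_vec 1)))"
    using dual_ell_inf2_eq[OF fd w] u0 u1 by (simp add: w_def)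
  finally show ?thesis by (simp only: norm_of_real)
qed

subsection \<open>The Hadamard operator\<close>

definition hadamard :: "(nat \<Rightarrow> 'k::real_normed_field vec) \<Rightarrow> 'k vec \<Rightarrow> 'k" where
  "hadamard x y = x 0 0 * (y 0 + y 1) + x 0 1 * (y 0 - y 1)"

lemma sum_hadamard: "(\<Sum>j<m. hadamard (xs j) y) = hadamard (\<lambda>l i. \<Sum>j<m. xs j l i) y"
  by (simp add: hadamard_def sum.distrib sum_distrib_right)

lemma norm_hadamard_le:
  assumes y: "y \<in> ell_inf2"
  shows "norm (hadamard x y) \<le> 2 * (norm (x 0 0) + norm (x 0 1)) * nrm y"
proof -
  have "norm (y 0 + y 1) \<le> 2 * nrm y" "norm (y 0 - y 1) \<le> 2 * nrm y"
    using norm_triangle_ineq[of "y 0" "y 1"] norm_triangle_ineq4[of "y 0" "y 1"]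
    by (auto simp: nrm_ell_inf2[OF y])
  then have "norm (x 0 0) * norm (y 0 + y 1) + norm (x 0 1) * norm (y 0 - y 1)
      \<le> norm (x 0 0) * (2 * nrm y) + norm (x 0 1) * (2 * nrm y)"
    by (intro add_mono mult_left_mono) auto
  moreover have "norm (hadamard x y) \<le> norm (x 0 0) * norm (y 0 + y 1) + norm (x 0 1) * norm (y 0 - y 1)"
    unfolding hadamard_def by (metis norm_mult norm_triangle_ineq)
  ultimately show ?thesis by (simp add: algebra_simps)
qed

text \<open>Only \<open>c < 4\<close> matters below; \<open>c = 2\<close> works over \<open>\<real>\<close> and \<open>c = 3\<close> over \<open>\<complex>\<close>.\<close>

context
  fixes c :: real
  assumes sum_diff_le: "\<And>a b::'k::{real_normed_field,banach}. norm a \<le> 1 \<Longrightarrow> norm b \<le> 1 \<Longrightarrow>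
    norm (a + b) + norm (a - b) \<le> c"
begin

lemma opnorm_hadamard_le:
  "opnorm ell_inf2 (hadamard (x :: nat \<Rightarrow> 'k vec)) \<le> c * max (norm (x 0 0)) (norm (x 0 1))"
proof (rule opnorm_le[OF banach_sub_ell_inf2])
  fix y :: "'k vec" assume y: "y \<in> ell_inf2" "nrm y \<le> 1"
  let ?M = "max (norm (x 0 0)) (norm (x 0 1))"
  have "norm (y 0) \<le> 1" "norm (y 1) \<le> 1" using y by (auto simp: nrm_ell_inf2)
  then have "?M * (norm (y 0 + y 1) + norm (y 0 - y 1)) \<le> ?M * c"
    by (intro mult_left_mono sum_diff_le) (auto simp: le_max_iff_disj)
  moreover have "norm (hadamard x y) \<le> ?M * norm (y 0 + y 1) + ?M * norm (y 0 - y 1)"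
    unfolding hadamard_def
    by (rule order_trans[OF norm_triangle_ineq], unfold norm_mult)
      (intro add_mono mult_right_mono, auto)
  ultimately show "norm (hadamard x y) \<le> c * ?M" by (simp add: algebra_simps)
qed

lemma L_eps_bound_hadamard: "L_eps_bound (\<lambda>_. ell_inf2 :: 'k vec set) 1 ell_inf2 hadamard c"
  unfolding L_eps_bound_def
proof (intro allI impI)
  fix m and xs :: "nat \<Rightarrow> nat \<Rightarrow> 'k vec" assume xs: "\<forall>j<m. xs j \<in> tuples (\<lambda>_. ell_inf2) 1"
  have c: "0 \<le> c" using sum_diff_le[of 0 0] by simp
  have "norm (\<Sum>j<m. xs j 0 i) \<le> epsn (\<lambda>_. ell_inf2) 1 m xs" for i
    using norm_le_epsn[OF _ xs, of "\<lambda>_ x. x i"] coordinate_in_dual_ball banach_sub_ell_inf2 by auto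
  then have "max (norm (\<Sum>j<m. xs j 0 0)) (norm (\<Sum>j<m. xs j 0 1)) \<le> epsn (\<lambda>_. ell_inf2) 1 m xs"
    by simp
  then show "opnorm ell_inf2 (\<lambda>y. \<Sum>j<m. hadamard (xs j) y) \<le> c * epsn (\<lambda>_. ell_inf2) 1 m xs"
    using opnorm_hadamard_le[of "\<lambda>l i. \<Sum>j<m. xs j l i"] c
    unfolding sum_hadamard by (meson mult_left_mono order_trans)
qed

lemma hadamard_in_L_eps: "(hadamard :: (nat \<Rightarrow> 'k vec) \<Rightarrow> 'k vec \<Rightarrow> 'k) \<in> L_eps (\<lambda>_. ell_inf2) 1 ell_inf2"
  unfolding L_eps_def
proof (intro CollectI conjI allI impI ballI exI)
  fix x :: "nat \<Rightarrow> 'k vec"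
  have "\<forall>y\<in>ell_inf2. norm (hadamard x y) \<le> 2 * (norm (x 0 0) + norm (x 0 1)) * nrm y"
    using norm_hadamard_le by blast
  then show "hadamard x \<in> dual ell_inf2"
    unfolding dual_def
    by (intro CollectI conjI exI[of _ "2 * (norm (x 0 0) + norm (x 0 1))"])
      (auto simp: hadamard_def algebra_simps)
next
  fix y :: "'k vec"
  show "multilin (\<lambda>_. ell_inf2) 1 (\<lambda>x. hadamard x y)"
    by (auto simp: multilin_def hadamard_def algebra_simps)
next
  fix x :: "nat \<Rightarrow> 'k vec" assume x: "x \<in> tuples (\<lambda>_. ell_inf2) 1"
  then have "max (norm (x 0 0)) (norm (x 0 1)) = nrm (x 0)"
    by (simp add: tuples_def nrm_ell_inf2)
  with opnorm_hadamard_le[of x]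
  show "opnorm ell_inf2 (hadamard x) \<le> c * (\<Prod>l<1. nrm (x l))" by simp
next
  show "L_eps_bound (\<lambda>_. ell_inf2) 1 ell_inf2 (hadamard :: (nat \<Rightarrow> 'k vec) \<Rightarrow> 'k vec \<Rightarrow> 'k) c"
    by (rule L_eps_bound_hadamard)
qed (auto simp: hadamard_def fun_eq_iff)

end

definition hadamard_tensor :: "nat \<Rightarrow> nat \<Rightarrow> 'k::real_normed_field vec" where
  "hadamard_tensor j l = [[basis_vec 0, basis_vec 0], [basis_vec 0, basis_vec 1],
     [basis_vec 1, basis_vec 0], [(\<lambda>i. - basis_vec 1 i), basis_vec 1]] ! j ! l"

lemma hadamard_tensor_in_tuples: "\<forall>j<4. hadamard_tensor j \<in> tuples (\<lambda>_. ell_inf2) 2"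
  by (auto simp: tuples_def hadamard_tensor_def eval_nat_numeral less_Suc_eq
      basis_vec_def ell_inf2_iff)

lemma sum_canon_hadamard_tensor: "(\<Sum>j<4. canon 1 hadamard (hadamard_tensor j)) = (4 :: 'k::real_normed_field)"
  by (simp add: canon_def hadamard_def hadamard_tensor_def basis_vec_def eval_nat_numeral)

lemma epsn_hadamard_tensor_le:
  "epsn (\<lambda>_. ell_inf2 :: 'k::{real_normed_field,banach} vec set) 2 4 hadamard_tensor \<le> 1"
proof (rule epsn_le)
  fix \<phi> :: "nat \<Rightarrow> 'k vec \<Rightarrow> 'k" assume \<phi>: "\<forall>l<2. \<phi> l \<in> dual_ball ell_inf2"
  define a0 a1 b0 b1 where "a0 = \<phi> 0 (basis_vec 0)" "a1 = \<phi> 0 (basis_vec 1)"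
    "b0 = \<phi> 1 (basis_vec 0)" "b1 = \<phi> 1 (basis_vec 1)"
  have \<phi>01: "\<phi> 0 \<in> dual_ball ell_inf2" "\<phi> 1 \<in> dual_ball ell_inf2" using \<phi> by auto
  then have a: "norm a0 + norm a1 \<le> 1" and b: "norm b0 + norm b1 \<le> 1"
    unfolding a0_a1_b0_b1_def by (auto dest: dual_ball_ell_inf2_le)
  have "\<phi> 0 (\<lambda>i. (-1) * basis_vec 1 i) = (-1) * a1"
    unfolding a0_a1_b0_b1_def using \<phi>01(1)
    by (intro dual_scale) (auto simp: dual_ball_def basis_vec_in_ell_inf2)
  then have "(\<Sum>j<4. \<Prod>l<2. \<phi> l (hadamard_tensor j l)) = a0 * (b0 + b1) + a1 * (b0 - b1)"
    by (simp add: hadamard_tensor_def eval_nat_numeral a0_a1_b0_b1_def algebra_simps)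
  also have "norm \<dots> \<le> norm a0 * (norm b0 + norm b1) + norm a1 * (norm b0 + norm b1)"
    by (rule order_trans[OF norm_triangle_ineq], unfold norm_mult)
      (intro add_mono mult_left_mono norm_triangle_ineq norm_triangle_ineq4 norm_ge_zero)
  also have "\<dots> = (norm a0 + norm a1) * (norm b0 + norm b1)" by (simp add: algebra_simps)
  also have "\<dots> \<le> 1" using a b by (simp add: mult_le_one)
  finally show "norm (\<Sum>j<4. \<Prod>l<2. \<phi> l (hadamard_tensor j l)) \<le> 1" .
qed (rule banach_sub_ell_inf2)

lemma not_L_eps_represented_by_eps:
  fixes c :: real
  assumes "c < 4"
    and sum_diff_le: "\<And>a b::'k::{real_normed_field,banach}. norm a \<le> 1 \<Longrightarrow> norm b \<le> 1 \<Longrightarrow>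
      norm (a + b) + norm (a - b) \<le> c"
  shows "\<not> L_eps_represented_by_eps TYPE('k)"
proof
  let ?E = "\<lambda>_. ell_inf2 :: 'k vec set"
  let ?T = "hadamard :: (nat \<Rightarrow> 'k vec) \<Rightarrow> 'k vec \<Rightarrow> 'k"
  assume "L_eps_represented_by_eps TYPE('k)"
  note canon_T = L_eps_represented_by_epsD[OF this order_refl _ banach_sub_ell_inf2
      hadamard_in_L_eps[OF sum_diff_le]]
  have E: "\<forall>l<1. banach_sub (?E l)" and E_upd: "?E(1 := ell_inf2) = ?E"
    by (simp_all add: banach_sub_ell_inf2 fun_eq_iff)
  have mem: "canon 1 ?T \<in> eps_dual ?E 2"
    using canon_T(1)[OF E] unfolding E_upd Suc_1 .
  have "4 = norm (\<Sum>j<4. canon 1 ?T (hadamard_tensor j))"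
    unfolding sum_canon_hadamard_tensor by simp
  also have "\<dots> \<le> eps_dual_norm ?E 2 (canon 1 ?T)"
    using banach_sub_ell_inf2 hadamard_tensor_in_tuples epsn_hadamard_tensor_le
    by (intro norm_sum_le_eps_dual_norm[OF _ mem]) simp_all
  also have "\<dots> = L_eps_norm ?E 1 ell_inf2 ?T"
    using canon_T(2)[OF E] unfolding E_upd Suc_1 .
  also have "\<dots> \<le> c"
    using sum_diff_le[of 0 0] by (intro L_eps_norm_le L_eps_bound_hadamard sum_diff_le) auto
  finally show False using \<open>c < 4\<close> by simp
qed

lemma norm_add_plus_norm_diff_le_real:
  "norm (a::real) \<le> 1 \<Longrightarrow> norm b \<le> 1 \<Longrightarrow> norm (a + b) + norm (a - b) \<le> 2"
  by (simp add: abs_le_iff) linarith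

lemma norm_add_plus_norm_diff_le_complex:
  fixes a b :: complex
  assumes "norm a \<le> 1" "norm b \<le> 1"
  shows "norm (a + b) + norm (a - b) \<le> 3"
proof -
  define p q where "p = norm (a + b)" "q = norm (a - b)"
  have "p\<^sup>2 + q\<^sup>2 = 2 * ((norm a)\<^sup>2 + (norm b)\<^sup>2)"
    unfolding p_q_def cmod_power2 by (simp add: power2_eq_square algebra_simps)
  also have "\<dots> \<le> 4"
    using power_le_one[OF norm_ge_zero assms(1), of 2] power_le_one[OF norm_ge_zero assms(2), of 2]
    by simp
  finally have "(p + q)\<^sup>2 \<le> 3\<^sup>2"
    using zero_le_power2[of "p - q"] by (simp add: power2_eq_square algebra_simps)
  then show ?thesis unfolding p_q_def by (rule power2_le_imp_le) simp
qed

theorem proposition2p7: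
  shows "\<not> L_eps_represented_by_eps TYPE(real) \<and> \<not> L_eps_represented_by_eps TYPE(complex)"
proof
  show "\<not> L_eps_represented_by_eps TYPE(real)"
    by (rule not_L_eps_represented_by_eps[of 2]) (auto intro: norm_add_plus_norm_diff_le_real)
  show "\<not> L_eps_represented_by_eps TYPE(complex)"
    by (rule not_L_eps_represented_by_eps[of 3]) (auto intro: norm_add_plus_norm_diff_le_complex)
qed

end
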